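(* Let $T$ be a sequence of length $n$ over $\mathbb{A}$ and $I\subseteq\mathbb{A}$ a nonempty finite itemset. For every window length $x$ with $1\le x\le n$, $$\mathrm{co}(T,I,x)=(n-x+1)-\sum_{k=x}^{n}(k-x+1)\,H[k],$$ where $H[k]=\sum_{\emptyset\neq A\subseteq I}(-1)^{|A|+1}N_A(k)$.
   Context: A sequence $T=(T[0],\dots,T[n-1])$ has entries in $\mathbb{A}$. For $1\le x\le n$ and $x-1\le i\le n-1$ the window $\omega(i,x)$ is the contiguous block $(T[i-x+1],\dots,T[i])$. The co-occurrence count $\mathrm{co}(T,I,x)$ is the number of indices $i\in\{x-1,\dots,n-1\}$ such that every element of $I$ occurs in $\omega(i,x)$. For $A\subseteq I$ nonempty, a maximal $A$-gap is a contiguous block $T[s..t]$ with $0\le s\le t\le n-1$ such that $T[j]\notin A$ for all $s\le j\le t$, and ($s=0$ or $T[s-1]\in A$) and ($t=n-1$ or $T[t+1]\in A$); its length is $t-s+1$. $N_A(k)$ denotes the number of maximal $A$-gaps of length $k$ in $T$. *)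

theory Defs
  imports Main
begin

definition window :: "'a list \<Rightarrow> nat \<Rightarrow> nat \<Rightarrow> 'a set" where
  "window T i x = {T ! j | j. i + 1 - x \<le> j \<and> j \<le> i}"

definition co :: "'a list \<Rightarrow> 'a set \<Rightarrow> nat \<Rightarrow> nat" where
  "co T I x = card {i. x - 1 \<le> i \<and> i \<le> length T - 1 \<and> I \<subseteq> window T i x}"

definition max_gap :: "'a list \<Rightarrow> 'a set \<Rightarrow> nat \<Rightarrow> nat \<Rightarrow> bool" where
  "max_gap T A s t \<longleftrightarrow> s \<le> t \<and> t \<le> length T - 1 \<and> t < length T \<and>
     (\<forall>j. s \<le> j \<and> j \<le> t \<longrightarrow> T ! j \<notin> A) \<and>
     (s = 0 \<or> T ! (s - 1) \<in> A) \<and>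
     (t = length T - 1 \<or> T ! (t + 1) \<in> A)"

definition N_gap :: "'a list \<Rightarrow> 'a set \<Rightarrow> nat \<Rightarrow> nat" where
  "N_gap T A k = card {(s, t). max_gap T A s t \<and> t - s + 1 = k}"

definition H :: "'a list \<Rightarrow> 'a set \<Rightarrow> nat \<Rightarrow> int" where
  "H T I k = (\<Sum>A \<in> {A. A \<subseteq> I \<and> A \<noteq> {}}. (-1) ^ (card A + 1) * int (N_gap T A k))"

end

theory Submission imports Defs begin

text \<open>A window ending at i avoids an itemset A exactly when its whole block
  T[i-x+1..i] lies inside a maximal A-gap T[s..t], i.e. when s + x - 1 \<le> i \<le> t; since
  distinct maximal A-gaps are disjoint, the number of such windows is the sum of
  k - x + 1 over the maximal A-gaps of length k \<ge> x. A window ending at i contains I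
  unless it avoids some single item of I, and inclusion-exclusion over the items of I
  turns the number of windows missing some item into the alternating sum of the
  numbers of windows avoiding the nonempty subsets A of I.\<close>

definition free_windows :: "'a list \<Rightarrow> 'a set \<Rightarrow> nat \<Rightarrow> nat set" where
  "free_windows T A x = {i. x - 1 \<le> i \<and> i < length T \<and> window T i x \<inter> A = {}}"

lemma window_disjoint_iff:
  "window T i x \<inter> A = {} \<longleftrightarrow> (\<forall>j. i + 1 - x \<le> j \<and> j \<le> i \<longrightarrow> T ! j \<notin> A)"
  unfolding window_def by blast

lemma max_gap_avoids:
  assumes "max_gap T A s t" "s \<le> j" "j \<le> t"
  shows "T ! j \<notin> A"
  using assms unfolding max_gap_def by blast

lemma max_gap_start_le:
  assumes g: "max_gap T A s t" and g': "max_gap T A s' t'"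
    and "s \<le> j" "j \<le> t" "s' \<le> j"
  shows "s' \<le> s"
proof (rule ccontr)
  assume "\<not> s' \<le> s"
  then have "T ! (s' - 1) \<in> A" using g' unfolding max_gap_def by auto
  moreover have "T ! (s' - 1) \<notin> A"
    using max_gap_avoids[OF g] \<open>\<not> s' \<le> s\<close> assms(4,5) by simp
  ultimately show False by contradiction
qed

lemma max_gap_end_le:
  assumes g: "max_gap T A s t" and g': "max_gap T A s' t'"
    and "s \<le> j" "j \<le> t" "j \<le> t'"
  shows "t \<le> t'"
proof (rule ccontr)
  assume "\<not> t \<le> t'"
  then have "T ! (t' + 1) \<in> A" using g g' unfolding max_gap_def by auto
  moreover have "T ! (t' + 1) \<notin> A"
    using max_gap_avoids[OF g] \<open>\<not> t \<le> t'\<close> assms(3,5) by simp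
  ultimately show False by contradiction
qed

lemma max_gap_unique:
  assumes "max_gap T A s t" "max_gap T A s' t'"
    and "s \<le> j" "j \<le> t" "s' \<le> j" "j \<le> t'"
  shows "s = s' \<and> t = t'"
  using max_gap_start_le[OF assms(1,2)] max_gap_start_le[OF assms(2,1)]
    max_gap_end_le[OF assms(1,2)] max_gap_end_le[OF assms(2,1)] assms(3-6)
  by (simp add: le_antisym)

lemma max_gap_exists:
  assumes "j \<le> i" "i < length T" and avoid: "\<forall>m. j \<le> m \<and> m \<le> i \<longrightarrow> T ! m \<notin> A"
  shows "\<exists>s t. max_gap T A s t \<and> s \<le> j \<and> i \<le> t"
proof -
  define P where "P l \<longleftrightarrow> (\<forall>m. l \<le> m \<and> m \<le> i \<longrightarrow> T ! m \<notin> A)" for l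
  define Q where "Q r \<longleftrightarrow> r < length T \<and> (\<forall>m. i \<le> m \<and> m \<le> r \<longrightarrow> T ! m \<notin> A)" for r
  define s where "s = (LEAST l. P l)"
  define t where "t = (GREATEST r. Q r)"
  have "P j" using avoid unfolding P_def by blast
  then have Ps: "P s" and "s \<le> j" unfolding s_def by (auto intro: LeastI Least_le)
  have "Q i" using assms unfolding Q_def by auto
  moreover have Q_bound: "\<And>r. Q r \<Longrightarrow> r \<le> length T" unfolding Q_def by simp
  ultimately have Qt: "Q t" and "i \<le> t"
    unfolding t_def by (auto intro: GreatestI_nat Greatest_le_nat)
  have "s = 0 \<or> T ! (s - 1) \<in> A"
  proof (rule ccontr)
    assume no_stop: "\<not> ?thesis"
    have "P (s - 1)" unfolding P_def
    proof (intro allI impI)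
      fix m assume "s - 1 \<le> m \<and> m \<le> i"
      then have "m = s - 1 \<or> s \<le> m" by linarith
      then show "T ! m \<notin> A" using Ps no_stop \<open>s - 1 \<le> m \<and> m \<le> i\<close> unfolding P_def by auto
    qed
    then have "s \<le> s - 1" unfolding s_def by (rule Least_le)
    with no_stop show False by auto
  qed
  moreover have "t = length T - 1 \<or> T ! (t + 1) \<in> A"
  proof (rule ccontr)
    assume "\<not> ?thesis"
    then have "Q (t + 1)" using Qt unfolding Q_def by (auto simp: le_Suc_eq)
    then have "t + 1 \<le> t" unfolding t_def by (rule Greatest_le_nat[OF _ Q_bound])
    then show False by simp
  qed
  moreover have "\<forall>m. s \<le> m \<and> m \<le> t \<longrightarrow> T ! m \<notin> A"
  proof (intro allI impI)
    fix m assume "s \<le> m \<and> m \<le> t"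
    then show "T ! m \<notin> A" using Ps Qt unfolding P_def Q_def by (cases "m \<le> i") auto
  qed
  ultimately have "max_gap T A s t"
    using \<open>s \<le> j\<close> \<open>j \<le> i\<close> \<open>i \<le> t\<close> Qt unfolding max_gap_def Q_def by auto
  with \<open>s \<le> j\<close> \<open>i \<le> t\<close> show ?thesis by blast
qed

lemma free_windows_eq_UN_max_gaps:
  assumes "1 \<le> x"
  shows "free_windows T A x = (\<Union>(s, t) \<in> {(s, t). max_gap T A s t}. {s + x - 1..t})"
proof (intro set_eqI iffI)
  fix i assume "i \<in> free_windows T A x"
  then have start: "x - 1 \<le> i" and "i + 1 - x \<le> i" "i < length T"
    "\<forall>m. i + 1 - x \<le> m \<and> m \<le> i \<longrightarrow> T ! m \<notin> A"
    using \<open>1 \<le> x\<close> unfolding free_windows_def window_disjoint_iff by auto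
  then obtain s t where "max_gap T A s t" "s \<le> i + 1 - x" "i \<le> t"
    using max_gap_exists by blast
  with \<open>1 \<le> x\<close> start show "i \<in> (\<Union>(s, t) \<in> {(s, t). max_gap T A s t}. {s + x - 1..t})"
    by (intro UN_I[of "(s, t)"]) auto
next
  fix i assume "i \<in> (\<Union>(s, t) \<in> {(s, t). max_gap T A s t}. {s + x - 1..t})"
  then obtain s t where g: "max_gap T A s t" and "s + x - 1 \<le> i" "i \<le> t" by auto
  moreover have "t < length T" using g unfolding max_gap_def by simp
  ultimately show "i \<in> free_windows T A x"
    using \<open>1 \<le> x\<close> max_gap_avoids[OF g]
    unfolding free_windows_def window_disjoint_iff by auto
qed

lemma card_free_windows:
  assumes "1 \<le> x"
  shows "card (free_windows T A x) = (\<Sum>k = x..length T. (k - x + 1) * N_gap T A k)"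
proof -
  define G where "G = {(s, t). max_gap T A s t}"
  define len :: "nat \<times> nat \<Rightarrow> nat" where "len = (\<lambda>(s, t). t - s + 1)"
  define block :: "nat \<times> nat \<Rightarrow> nat set" where "block = (\<lambda>(s, t). {s + x - 1..t})"
  have "G \<subseteq> {..<length T} \<times> {..<length T}" unfolding G_def max_gap_def by auto
  then have "finite G" by (rule finite_subset) simp
  have disjoint: "\<forall>g\<in>G. \<forall>g'\<in>G. g \<noteq> g' \<longrightarrow> block g \<inter> block g' = {}"
  proof (intro ballI impI)
    fix g g' assume "g \<in> G" "g' \<in> G" "g \<noteq> g'"
    then obtain s t s' t' where "g = (s, t)" "g' = (s', t')"
      and "max_gap T A s t" "max_gap T A s' t'" "s' \<noteq> s \<or> t' \<noteq> t"
      unfolding G_def by auto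
    with max_gap_unique[of T A s t s' t'] \<open>1 \<le> x\<close>
    show "block g \<inter> block g' = {}" unfolding block_def by fastforce
  qed
  have len_range: "len ` G \<subseteq> {1..length T}" unfolding G_def len_def max_gap_def by auto
  have "card (free_windows T A x) = (\<Sum>g\<in>G. card (block g))"
    unfolding free_windows_eq_UN_max_gaps[OF \<open>1 \<le> x\<close>] G_def[symmetric] block_def[symmetric]
    by (rule card_UN_disjoint[OF \<open>finite G\<close> _ disjoint]) (simp add: block_def split: prod.split)
  also have "\<dots> = (\<Sum>g\<in>G. len g + 1 - x)"
    using \<open>1 \<le> x\<close> by (intro sum.cong) (auto simp: len_def block_def G_def max_gap_def)
  also have "\<dots> = (\<Sum>k\<in>{1..length T}. \<Sum>g\<in>{g\<in>G. len g = k}. k + 1 - x)"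
    by (subst sum.group[OF \<open>finite G\<close> finite_atLeastAtMost len_range, symmetric]) simp
  also have "\<dots> = (\<Sum>k\<in>{1..length T}. (k + 1 - x) * N_gap T A k)"
    by (simp add: N_gap_def G_def len_def case_prod_beta' mult.commute)
  also have "\<dots> = (\<Sum>k = x..length T. (k - x + 1) * N_gap T A k)"
    using \<open>1 \<le> x\<close> by (intro sum.mono_neutral_cong_right) (auto simp: Suc_diff_le)
  finally show ?thesis .
qed

lemma co_inclusion_exclusion:
  assumes "finite I" "1 \<le> x" "x \<le> length T"
  shows "int (co T I x) = int (length T - x + 1)
    - (\<Sum>A | A \<subseteq> I \<and> A \<noteq> {}. (-1) ^ (card A + 1) * int (card (free_windows T A x)))"
proof -
  define W where "W = {x - 1..<length T}"
  define missing where "missing a = {i. a \<notin> window T i x}" for a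
  define f where "f S = int (card (W \<inter> S))" for S
  have "finite W" unfolding W_def by simp
  have "{i. x - 1 \<le> i \<and> i \<le> length T - 1 \<and> I \<subseteq> window T i x} = W - \<Union>(missing ` I)"
    using assms(2,3) unfolding W_def missing_def by auto
  then have "int (co T I x) = int (card W) - f (\<Union>(missing ` I))"
    using card_Int_Diff[OF \<open>finite W\<close>, of "\<Union>(missing ` I)"] unfolding co_def f_def by simp
  moreover have "card W = length T - x + 1" unfolding W_def using assms(2,3) by simp
  moreover have "f (\<Union>(missing ` I))
      = (\<Sum>A | A \<subseteq> I \<and> A \<noteq> {}. (-1) ^ (card A + 1) * f (\<Inter>(missing ` A)))"
  proof (rule Incl_Excl_UN[OF _ \<open>finite I\<close>])
    fix S U :: "nat set" assume "disjnt S U"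
    then show "f (S \<union> U) = f S + f U"
      unfolding f_def using \<open>finite W\<close>
      by (simp add: Int_Un_distrib card_Un_disjoint disjoint_iff disjnt_def)
  qed
  moreover have "W \<inter> \<Inter>(missing ` A) = free_windows T A x" for A
    unfolding W_def missing_def free_windows_def by auto
  ultimately show ?thesis unfolding f_def by simp
qed

theorem mainTheorem2:
  fixes T :: "'a list" and I :: "'a set" and x :: nat
  assumes "finite I" and "I \<noteq> {}"
    and "1 \<le> x" and "x \<le> length T"
  shows "int (co T I x) =
    int (length T - x + 1) - (\<Sum>k = x..length T. int (k - x + 1) * H T I k)"
proof -
  let ?S = "{A. A \<subseteq> I \<and> A \<noteq> {}}"
  have "(\<Sum>k = x..length T. int (k - x + 1) * H T I k)
      = (\<Sum>k = x..length T. \<Sum>A\<in>?S. (-1) ^ (card A + 1) * (int (k - x + 1) * int (N_gap T A k)))"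
    unfolding H_def sum_distrib_left by (intro sum.cong refl) (simp only: mult.left_commute)
  also have "\<dots> = (\<Sum>A\<in>?S. (-1) ^ (card A + 1) * (\<Sum>k = x..length T. int (k - x + 1) * int (N_gap T A k)))"
    by (subst sum.swap) (simp only: sum_distrib_left)
  also have "\<dots> = (\<Sum>A\<in>?S. (-1) ^ (card A + 1) * int (card (free_windows T A x)))"
    by (simp only: card_free_windows[OF \<open>1 \<le> x\<close>] of_nat_sum of_nat_mult)
  finally show ?thesis
    using co_inclusion_exclusion[OF \<open>finite I\<close> \<open>1 \<le> x\<close> \<open>x \<le> length T\<close>] by simp
qed

end
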